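(* With the notation of the context, let $N\ge2$, $\eta>0$ be a constant, and $Q$ a probability distribution on $\{\alpha_1,\dots,\alpha_N\}$. (i) If $Q(\alpha_i)<Q^*(\alpha_i)+\eta/N^2$ for all $i$, then $L(Q)<H(p)+D(p\|q)+\eta/N$. (ii) If $Q(\alpha_i)<Q^*(\alpha_i)+\eta/(N\lg N)$ for all $i$, then $L(Q)<H(p)+D(p\|q)+\eta/\lg N$. (iii) If $Q(\alpha_i)<Q^*(\alpha_i)+\eta/N$ for all $i$, then $L(Q)<H(p)+D(p\|q)+\eta$.
   Context: Let $\mathcal S$ be a finite alphabet with $|\mathcal S|\ge2$, $p$ a probability distribution on $\mathcal S$ with $p(s)>0$, $N_s$ ($s\in\mathcal S$) positive integers, $N=\sum_sN_s$, $q(s)=N_s/N$, $\lg=\log_2$, and $\kappa_s=\lceil\lg(N/N_s)\rceil$ (so $\kappa_s\ge1$ and $N\le 2^{\kappa_s}N_s<2N$). Let $\alpha_1,\dots,\alpha_N$ be the states. For a probability distribution $Q$ on $\{\alpha_1,\dots,\alpha_N\}$ define $L(Q)=\sum_s p(s)\sum_{i=1}^N Q(\alpha_i)\ell_s(i)$, where $\ell_s(i)=\kappa_s-1$ if $i\le 2^{\kappa_s}N_s-N$ and $\ell_s(i)=\kappa_s$ otherwise. (This is the average code length of the Yokoo–Dubé-type sAEDS, whose state $\alpha_i$ encodes $s$ with $\ell_s(i)$ bits, when $Q$ is its stationary distribution with states indexed in non-increasing order of $Q$.) $Q^*(\alpha_i)=\lg\frac{N+i}{N+i-1}$, which sums to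 1. $H(p)=-\sum p\lg p$, $D(p\|q)=\sum p\lg(p/q)$. *)

theory Defs
  imports "HOL-Analysis.Analysis"
begin

(* Alphabet S (finite set), probability p on S, multiplicities Ns :: 'a => nat.
   States alpha_1..alpha_N are represented by their indices i in {1..N}. *)

definition totN :: "'a set \<Rightarrow> ('a \<Rightarrow> nat) \<Rightarrow> nat" where
  "totN S Ns = (\<Sum>s\<in>S. Ns s)"

definition kappa :: "'a set \<Rightarrow> ('a \<Rightarrow> nat) \<Rightarrow> 'a \<Rightarrow> nat" where
  "kappa S Ns s = nat \<lceil>log 2 (real (totN S Ns) / real (Ns s))\<rceil>"

definition ell :: "'a set \<Rightarrow> ('a \<Rightarrow> nat) \<Rightarrow> 'a \<Rightarrow> nat \<Rightarrow> nat" where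
  "ell S Ns s i = (if i \<le> 2 ^ kappa S Ns s * Ns s - totN S Ns
                   then kappa S Ns s - 1 else kappa S Ns s)"

definition avg_len :: "'a set \<Rightarrow> ('a \<Rightarrow> real) \<Rightarrow> ('a \<Rightarrow> nat) \<Rightarrow> (nat \<Rightarrow> real) \<Rightarrow> real" where
  "avg_len S p Ns Q = (\<Sum>s\<in>S. p s * (\<Sum>i=1..totN S Ns. Q i * real (ell S Ns s i)))"

definition Qstar :: "nat \<Rightarrow> nat \<Rightarrow> real" where
  "Qstar N i = log 2 (real (N + i) / real (N + i - 1))"

definition entropy2 :: "'a set \<Rightarrow> ('a \<Rightarrow> real) \<Rightarrow> real" where
  "entropy2 S p = - (\<Sum>s\<in>S. p s * log 2 (p s))"

definition kl2 :: "'a set \<Rightarrow> ('a \<Rightarrow> real) \<Rightarrow> ('a \<Rightarrow> real) \<Rightarrow> real" where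
  "kl2 S p q = (\<Sum>s\<in>S. p s * log 2 (p s / q s))"

definition qdist :: "'a set \<Rightarrow> ('a \<Rightarrow> nat) \<Rightarrow> 'a \<Rightarrow> real" where
  "qdist S Ns s = real (Ns s) / real (totN S Ns)"

end

theory Submission
  imports Defs
begin

(* With m = 2^kappa_s N_s - N, the state alpha_i spends kappa_s - 1 bits on s for i <= m and
   kappa_s bits otherwise, so the expected length of s under Q is kappa_s minus the Q-mass of
   the first m states.  Under Q* that mass telescopes to lg((N + m)/N) = kappa_s - lg(1/q(s)),
   i.e. Q* encodes every s with exactly its ideal length.  Since Q and Q* both have mass 1,
   the excess of Q over Q* equals the Q-excess on the remaining N - m states, which the
   hypothesis bounds by N times the slack.  Averaging over p turns lg(1/q) into H(p) + D(p||q). *)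

lemma sum_Qstar:
  assumes "N \<ge> 1"
  shows "(\<Sum>i=1..m. Qstar N i) = log 2 (real (N + m) / real N)"
proof (induction m)
  case 0
  then show ?case using assms by simp
next
  case (Suc m)
  have "(\<Sum>i=1..Suc m. Qstar N i) = log 2 (real (N + m) / real N) + Qstar N (Suc m)"
    using Suc by simp
  also have "\<dots> = log 2 (real (N + m) / real N) + log 2 (real (N + Suc m) / real (N + m))"
    by (simp add: Qstar_def)
  also have "\<dots> = log 2 (real (N + Suc m) / real N)"
    using assms by (simp add: log_divide_pos)
  finally show ?case .
qed

lemma sum_Qstar_eq_1:
  assumes "N \<ge> 1"
  shows "(\<Sum>i=1..N. Qstar N i) = 1"
  using sum_Qstar[OF assms, of N] assms by simp

lemma ceiling_log2_ratio_bounds: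
  fixes N n k :: nat
  assumes "0 < n" "n \<le> N" "k = nat \<lceil>log 2 (real N / real n)\<rceil>"
  shows "N \<le> 2 ^ k * n" "2 ^ k * n < 2 * N"
proof -
  have pos: "real N / real n > 0" and "log 2 (real N / real n) \<ge> 0"
    using assms by simp_all
  then have k: "real k = of_int \<lceil>log 2 (real N / real n)\<rceil>"
    using assms(3) by simp
  have "log 2 (real N / real n) \<le> real k"
    using k by linarith
  then have "real N / real n \<le> 2 ^ k"
    using less_log_iff[OF _ pos, of 2 "real k"] by (simp add: powr_realpow not_less)
  then have "real N \<le> real (2 ^ k * n)"
    using assms by (simp add: field_simps)
  then show "N \<le> 2 ^ k * n"
    by (simp only: of_nat_le_iff)
  have "real k - 1 < log 2 (real N / real n)"
    using k by linarith
  then have "2 powr real k / 2 < real N / real n"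
    using less_log_iff[OF _ pos, of 2] by (simp add: powr_diff)
  then have "real (2 ^ k * n) < real (2 * N)"
    using \<open>0 < n\<close> by (simp add: powr_realpow field_simps)
  then show "2 ^ k * n < 2 * N"
    by (simp only: of_nat_less_iff)
qed

lemma sum_mult_step_function:
  fixes N m k :: nat and R :: "nat \<Rightarrow> real"
  assumes "m \<le> N" and "m \<ge> 1 \<Longrightarrow> k \<ge> 1"
    and "\<And>i. l i = (if i \<le> m then k - 1 else k)"
  shows "(\<Sum>i=1..N. R i * real (l i)) = real k * (\<Sum>i=1..N. R i) - (\<Sum>i=1..m. R i)"
proof -
  have "(\<Sum>i=1..N. R i * real (l i)) = (\<Sum>i=1..N. real k * R i - (if i \<le> m then R i else 0))"
    using assms(2,3) by (intro sum.cong) (auto simp: of_nat_diff algebra_simps)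
  also have "\<dots> = real k * (\<Sum>i=1..N. R i) - (\<Sum>i\<in>{1..N} \<inter> {i. i \<le> m}. R i)"
    by (simp add: sum_subtractf sum_distrib_left sum.inter_restrict)
  also have "{1..N} \<inter> {i. i \<le> m} = {1..m}"
    using assms(1) by auto
  finally show ?thesis .
qed

lemma sum_head_diff_eq_sum_tail_diff:
  fixes R R' :: "nat \<Rightarrow> real"
  assumes "m \<le> N" and "(\<Sum>i=1..N. R i) = (\<Sum>i=1..N. R' i)"
  shows "(\<Sum>i=1..m. R' i - R i) = (\<Sum>i=Suc m..N. R i - R' i)"
proof -
  have split: "(\<Sum>i=1..N. f i) = (\<Sum>i=1..m. f i) + (\<Sum>i=Suc m..N. f i)" for f :: "nat \<Rightarrow> real"
  proof -
    have "{1..N} = {1..m} \<union> {Suc m..N}"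
      using assms(1) by auto
    then show ?thesis
      by (simp add: sum.union_disjoint)
  qed
  show ?thesis
    using split[of R] split[of R'] assms(2) by (simp add: sum_subtractf)
qed

lemma Ns_le_totN:
  assumes "finite S" "s \<in> S"
  shows "Ns s \<le> totN S Ns"
  unfolding totN_def using assms by (simp add: member_le_sum)

lemma totN_ge_1:
  assumes "finite S" and "s \<in> S" and "Ns s > 0"
  shows "totN S Ns \<ge> 1"
  using Ns_le_totN[where Ns = Ns, OF assms(1,2)] assms(3) by simp

lemma
  assumes "finite S" and "s \<in> S" and "Ns s > 0"
  defines "N \<equiv> totN S Ns" and "k \<equiv> kappa S Ns s"
  shows totN_le_pow_kappa: "N \<le> 2 ^ k * Ns s"
    and pow_kappa_less_double_totN: "2 ^ k * Ns s < 2 * N"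
  using ceiling_log2_ratio_bounds[OF assms(3) Ns_le_totN[where Ns = Ns, OF assms(1,2)]]
  by (simp_all add: N_def k_def kappa_def)

lemma sum_mult_ell:
  assumes "finite S" and "s \<in> S" and "Ns s > 0"
    and "(\<Sum>i=1..totN S Ns. R i) = 1"
  shows "(\<Sum>i=1..totN S Ns. R i * real (ell S Ns s i))
       = real (kappa S Ns s) - (\<Sum>i=1..2 ^ kappa S Ns s * Ns s - totN S Ns. R i)"
proof -
  let ?m = "2 ^ kappa S Ns s * Ns s - totN S Ns"
  have "?m \<le> totN S Ns"
    using pow_kappa_less_double_totN[where Ns = Ns, OF assms(1-3)] by simp
  moreover have "kappa S Ns s \<ge> 1" if "?m \<ge> 1"
    using that Ns_le_totN[where Ns = Ns, OF assms(1,2)] by (cases "kappa S Ns s") auto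
  ultimately show ?thesis
    using sum_mult_step_function[of ?m "totN S Ns" "kappa S Ns s" "ell S Ns s" R] assms(4)
    by (simp add: ell_def)
qed

lemma sum_Qstar_mult_ell:
  assumes "finite S" and "s \<in> S" and "Ns s > 0"
  shows "(\<Sum>i=1..totN S Ns. Qstar (totN S Ns) i * real (ell S Ns s i))
       = log 2 (real (totN S Ns) / real (Ns s))"
proof -
  define N where "N = totN S Ns"
  define k where "k = kappa S Ns s"
  have N: "N \<ge> 1"
    using totN_ge_1[where Ns = Ns, OF assms(1-3)] by (simp add: N_def)
  have Qstar_sum: "(\<Sum>i=1..totN S Ns. Qstar N i) = 1"
    using sum_Qstar_eq_1[OF N] by (simp add: N_def)
  have "N + (2 ^ k * Ns s - N) = 2 ^ k * Ns s"
    using totN_le_pow_kappa[where Ns = Ns, OF assms] by (simp add: N_def k_def)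
  then have "(\<Sum>i=1..2 ^ k * Ns s - N. Qstar N i) = log 2 (2 ^ k * real (Ns s) / real N)"
    using sum_Qstar[OF N, of "2 ^ k * Ns s - N"] by simp
  also have "\<dots> = real k - log 2 (real N / real (Ns s))"
    using assms(3) N by (simp add: log_divide_pos log_mult)
  finally show ?thesis
    using sum_mult_ell[OF assms Qstar_sum[unfolded N_def]] by (simp add: N_def k_def)
qed

lemma sum_mult_ell_less:
  assumes "finite S" and "s \<in> S" and "Ns s > 0"
    and "(\<Sum>i=1..totN S Ns. Q i) = 1"
    and "\<forall>i\<in>{1..totN S Ns}. Q i < Qstar (totN S Ns) i + \<epsilon>" and "\<epsilon> > 0"
  shows "(\<Sum>i=1..totN S Ns. Q i * real (ell S Ns s i))
       < log 2 (real (totN S Ns) / real (Ns s)) + real (totN S Ns) * \<epsilon>"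
proof -
  define N where "N = totN S Ns"
  define m where "m = 2 ^ kappa S Ns s * Ns s - N"
  have N: "N \<ge> 1"
    using totN_ge_1[where Ns = Ns, OF assms(1-3)] by (simp add: N_def)
  have Qstar_sum: "(\<Sum>i=1..totN S Ns. Qstar N i) = 1"
    using sum_Qstar_eq_1[OF N] by (simp add: N_def)
  have m: "m < N"
    using pow_kappa_less_double_totN[where Ns = Ns, OF assms(1-3)] by (simp add: m_def N_def)
  have "(\<Sum>i=1..N. Q i * real (ell S Ns s i)) - (\<Sum>i=1..N. Qstar N i * real (ell S Ns s i))
      = (\<Sum>i=1..m. Qstar N i - Q i)"
    using sum_mult_ell[OF assms(1-4)] sum_mult_ell[OF assms(1-3) Qstar_sum[unfolded N_def]]
    by (simp add: N_def m_def sum_subtractf)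
  also have "\<dots> = (\<Sum>i=Suc m..N. Q i - Qstar N i)"
    using m assms(4) Qstar_sum
    by (intro sum_head_diff_eq_sum_tail_diff) (simp_all add: N_def)
  also have "\<dots> < (\<Sum>i=Suc m..N. \<epsilon>)"
  proof (rule sum_strict_mono)
    fix i
    assume "i \<in> {Suc m..N}"
    then show "Q i - Qstar N i < \<epsilon>"
      using assms(5) by (simp add: N_def algebra_simps)
  qed (use m in auto)
  also have "\<dots> \<le> real N * \<epsilon>"
    using assms(6) by (simp add: mult_right_mono)
  finally show ?thesis
    using sum_Qstar_mult_ell[where Ns = Ns, OF assms(1-3)] by (simp add: N_def)
qed

lemma sum_log_inverse_qdist:
  assumes "finite S" and "\<forall>s\<in>S. p s > 0" and "\<forall>s\<in>S. Ns s > 0"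
  shows "(\<Sum>s\<in>S. p s * log 2 (real (totN S Ns) / real (Ns s))) = entropy2 S p + kl2 S p (qdist S Ns)"
proof -
  have "p s * log 2 (real (totN S Ns) / real (Ns s)) = p s * log 2 (p s / qdist S Ns s) - p s * log 2 (p s)"
    if "s \<in> S" for s
  proof -
    have q: "p s / qdist S Ns s = p s * (real (totN S Ns) / real (Ns s))"
      by (simp add: qdist_def)
    have "log 2 (p s * (real (totN S Ns) / real (Ns s)))
        = log 2 (p s) + log 2 (real (totN S Ns) / real (Ns s))"
      using assms that totN_ge_1[where Ns = Ns, OF assms(1) that] by (subst log_mult) auto
    then show ?thesis
      unfolding q by (simp add: algebra_simps)
  qed
  then show ?thesis
    by (simp add: entropy2_def kl2_def sum_subtractf)
qed

lemma avg_len_less: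
  assumes "finite S" and "S \<noteq> {}"
    and "\<forall>s\<in>S. p s > 0" and "(\<Sum>s\<in>S. p s) = 1"
    and "\<forall>s\<in>S. Ns s > 0"
    and "(\<Sum>i=1..totN S Ns. Q i) = 1"
    and "\<forall>i\<in>{1..totN S Ns}. Q i < Qstar (totN S Ns) i + \<epsilon>" and "\<epsilon> > 0"
  shows "avg_len S p Ns Q < entropy2 S p + kl2 S p (qdist S Ns) + real (totN S Ns) * \<epsilon>"
proof -
  let ?N = "real (totN S Ns)"
  have "avg_len S p Ns Q < (\<Sum>s\<in>S. p s * (log 2 (?N / real (Ns s)) + ?N * \<epsilon>))"
    unfolding avg_len_def using assms sum_mult_ell_less[OF assms(1) _ _ assms(6-8)]
    by (intro sum_strict_mono) auto
  also have "\<dots> = (\<Sum>s\<in>S. p s * log 2 (?N / real (Ns s))) + ?N * \<epsilon>"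
    using assms(4) by (simp add: distrib_left sum.distrib flip: sum_distrib_right)
  finally show ?thesis
    using sum_log_inverse_qdist[OF assms(1,3,5)] by simp
qed

theorem lemma2:
  fixes S :: "'a set" and p :: "'a \<Rightarrow> real" and Ns :: "'a \<Rightarrow> nat"
    and Q :: "nat \<Rightarrow> real" and \<eta> :: real
  assumes "finite S" and "card S \<ge> 2"
    and "\<forall>s\<in>S. p s > 0" and "(\<Sum>s\<in>S. p s) = 1"
    and "\<forall>s\<in>S. Ns s > 0"
    and "totN S Ns \<ge> 2"
    and "\<eta> > 0"
    and "\<forall>i\<in>{1..totN S Ns}. Q i \<ge> 0"
    and "(\<Sum>i=1..totN S Ns. Q i) = 1"
  shows
    "((\<forall>i\<in>{1..totN S Ns}. Q i < Qstar (totN S Ns) i + \<eta> / real (totN S Ns) ^ 2)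
        \<longrightarrow> avg_len S p Ns Q < entropy2 S p + kl2 S p (qdist S Ns) + \<eta> / real (totN S Ns))
   \<and> ((\<forall>i\<in>{1..totN S Ns}. Q i < Qstar (totN S Ns) i
                 + \<eta> / (real (totN S Ns) * log 2 (real (totN S Ns))))
        \<longrightarrow> avg_len S p Ns Q < entropy2 S p + kl2 S p (qdist S Ns) + \<eta> / log 2 (real (totN S Ns)))
   \<and> ((\<forall>i\<in>{1..totN S Ns}. Q i < Qstar (totN S Ns) i + \<eta> / real (totN S Ns))
        \<longrightarrow> avg_len S p Ns Q < entropy2 S p + kl2 S p (qdist S Ns) + \<eta>)"
proof -
  define N where "N = real (totN S Ns)"
  have N: "N \<ge> 2" and "log 2 N > 0"
    using assms(6) by (simp_all add: N_def)
  then have slack: "\<eta> / N ^ 2 > 0" "\<eta> / (N * log 2 N) > 0" "\<eta> / N > 0"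
    using assms(7) by simp_all
  have "S \<noteq> {}"
    using assms(2) by auto
  note bound = avg_len_less[OF assms(1) this assms(3-5,9)]
  have scale: "N * (\<eta> / N ^ 2) = \<eta> / N" "N * (\<eta> / (N * log 2 N)) = \<eta> / log 2 N" "N * (\<eta> / N) = \<eta>"
    using N by (simp_all add: power2_eq_square)
  show ?thesis
    using bound[OF _ slack(1)] bound[OF _ slack(2)] bound[OF _ slack(3)]
    unfolding N_def[symmetric] scale by blast
qed

end
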